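(* Let $T$ be an $i$-subset of $[r]$. Then there exist at least $\lfloor r-\tfrac{5}{2}i\rfloor$ sets $S\subseteq[r]$ with $|S|=i+1$, $T\subseteq S$, such that $S$ dominates $T$.
   Context: For $\pi=a_1\cdots a_{r+1}\in S_{r+1}$, its descent set is $\{j\in[r]:a_j>a_{j+1}\}$, and $D(S)$ is the set of permutations in $S_{r+1}$ with descent set $S$. The inversion set is $I(\pi)=\{(a_j,a_k):j<k,\ a_j>a_k\}$; $\pi\le_w\pi'$ iff $I(\pi)\subseteq I(\pi')$ (weak Bruhat order). $S$ dominates $T$ if there is an injection $\phi:D(T)\to D(S)$ with $\pi\le_w\phi(\pi)$ for all $\pi\in D(T)$. *)

theory Defs
  imports Complex_Main "HOL-Combinatorics.Permutations"
begin

text \<open>A permutation pi = a_1 ... a_(r+1) of S_(r+1) is represented as a bijection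
  pi permuting {1..r+1}, with a_j = pi j.\<close>

definition perms :: "nat \<Rightarrow> (nat \<Rightarrow> nat) set" where
  "perms r = {p. p permutes {1..Suc r}}"

definition descent_set :: "nat \<Rightarrow> (nat \<Rightarrow> nat) \<Rightarrow> nat set" where
  "descent_set r p = {j \<in> {1..r}. p j > p (Suc j)}"

definition Dset :: "nat \<Rightarrow> nat set \<Rightarrow> (nat \<Rightarrow> nat) set" where
  "Dset r S = {p \<in> perms r. descent_set r p = S}"

definition inversions :: "nat \<Rightarrow> (nat \<Rightarrow> nat) \<Rightarrow> (nat \<times> nat) set" where
  "inversions r p = {(p j, p k) | j k. j \<in> {1..Suc r} \<and> k \<in> {1..Suc r} \<and> j < k \<and> p j > p k}"

definition weak_le :: "nat \<Rightarrow> (nat \<Rightarrow> nat) \<Rightarrow> (nat \<Rightarrow> nat) \<Rightarrow> bool" where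
  "weak_le r p q \<longleftrightarrow> inversions r p \<subseteq> inversions r q"

definition dominates :: "nat \<Rightarrow> nat set \<Rightarrow> nat set \<Rightarrow> bool" where
  "dominates r S T \<longleftrightarrow> (\<exists>\<phi>. inj_on \<phi> (Dset r T) \<and> \<phi> ` Dset r T \<subseteq> Dset r S
      \<and> (\<forall>p \<in> Dset r T. weak_le r p (\<phi> p)))"

end

theory Submission
  imports Defs "HOL-Combinatorics.Multiset_Permutations"
begin

text \<open>Adding a position \<open>j \<notin> T\<close> to \<open>T\<close> gives a set dominating \<open>T\<close> as soon as the descents of
  \<open>T\<close> near \<open>j\<close> form one of three local configurations. In each of them one rearranges the
  values of \<open>\<pi>\<close> inside a window of 2, 4 or 6 positions around \<open>j\<close>, depending only on their
  relative order: the rearrangement creates the descent \<open>j\<close>, keeps every other descent, only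
  adds inversions, and different \<open>\<pi>\<close> give different results (for the two larger windows this
  is a finite check over a table). A charging argument shows that at most \<open>(3i + 1)/2\<close> of the
  \<open>r - i\<close> positions outside \<open>T\<close> are in none of the configurations.\<close>

definition window_pattern :: "(nat \<Rightarrow> nat) \<Rightarrow> nat \<Rightarrow> nat \<Rightarrow> nat list" where
  "window_pattern p s w = map (\<lambda>k. card {l \<in> {0..<w}. p (s + l) < p (s + k)}) [0..<w]"

lemma length_window_pattern [simp]: "length (window_pattern p s w) = w"
  by (simp add: window_pattern_def)

lemma window_pattern_less_iff:
  assumes "a < w" "b < w"
  shows "window_pattern p s w ! a < window_pattern p s w ! b \<longleftrightarrow> p (s + a) < p (s + b)"
proof -
  define below where "below x = {l \<in> {0..<w}. p (s + l) < x}" for x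
  have "card (below (p (s + a))) < card (below (p (s + b)))" if "p (s + a) < p (s + b)"
  proof (rule psubset_card_mono)
    show "below (p (s + a)) \<subset> below (p (s + b))"
      using that \<open>a < w\<close> by (auto simp: below_def)
  qed (simp add: below_def)
  moreover have "card (below (p (s + b))) \<le> card (below (p (s + a)))" if "\<not> p (s + a) < p (s + b)"
    using that by (intro card_mono) (auto simp: below_def)
  moreover have "window_pattern p s w ! a = card (below (p (s + a)))"
    "window_pattern p s w ! b = card (below (p (s + b)))"
    using assms by (simp_all add: window_pattern_def below_def)
  ultimately show ?thesis
    by (metis leD)
qed

lemma window_pattern_cong:
  assumes "\<And>a b. a < w \<Longrightarrow> b < w \<Longrightarrow> p (s + a) < p (s + b) \<longleftrightarrow> q (t + a) < q (t + b)"
  shows "window_pattern p s w = window_pattern q t w"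
  unfolding window_pattern_def using assms by (intro map_cong refl arg_cong[where f = card]) auto

lemma window_pattern_in_permutations:
  assumes "inj_on p {s..<s + w}"
  shows "window_pattern p s w \<in> permutations_of_set {0..<w}"
proof
  let ?P = "window_pattern p s w"
  show distinct: "distinct ?P"
  proof (subst distinct_conv_nth, intro allI impI)
    fix a b assume "a < length ?P" "b < length ?P" "a \<noteq> b"
    then have "p (s + a) \<noteq> p (s + b)"
      using assms by (auto dest: inj_onD)
    then show "?P ! a \<noteq> ?P ! b"
      using window_pattern_less_iff[of a w b p s] window_pattern_less_iff[of b w a p s]
        \<open>a < length ?P\<close> \<open>b < length ?P\<close>
      by (metis length_window_pattern linorder_neq_iff order_less_irrefl)
  qed
  have "card {l \<in> {0..<w}. p (s + l) < p (s + k)} < w" if "k < w" for k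
  proof -
    have "card {l \<in> {0..<w}. p (s + l) < p (s + k)} \<le> card ({0..<w} - {k})"
      by (intro card_mono) auto
    then show ?thesis
      using that by simp
  qed
  then have "set ?P \<subseteq> {0..<w}"
    by (auto simp: window_pattern_def)
  moreover have "card (set ?P) = w"
    using distinct_card[OF distinct] by simp
  ultimately show "set ?P = {0..<w}"
    by (intro card_subset_eq) auto
qed

lemma window_pattern_of_permutation_list:
  assumes "xs \<in> permutations_of_set {0..<n}"
  shows "window_pattern ((!) xs) 0 n = xs"
proof (rule nth_equalityI)
  have set_xs: "set xs = {0..<n}" and "distinct xs" and length_xs: "length xs = n"
    using assms by (auto dest: permutations_of_setD simp: length_finite_permutations_of_set)
  then show "length (window_pattern ((!) xs) 0 n) = length xs"
    by simp
  fix a assume "a < length (window_pattern ((!) xs) 0 n)"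
  then have "a < n" by simp
  have "(!) xs ` {l \<in> {0..<n}. xs ! l < xs ! a} = {v \<in> set xs. v < xs ! a}"
    using length_xs by (auto simp: in_set_conv_nth)
  also have "\<dots> = {0..<xs ! a}"
    using set_xs nth_mem[of a xs] \<open>a < n\<close> length_xs by auto
  finally have "card {l \<in> {0..<n}. xs ! l < xs ! a} = xs ! a"
    using card_image[OF inj_on_nth[OF \<open>distinct xs\<close>]] length_xs
    by (metis (no_types, lifting) atLeastLessThan_iff card_atLeastLessThan diff_zero mem_Collect_eq)
  then show "window_pattern ((!) xs) 0 n ! a = xs ! a"
    using \<open>a < n\<close> by (simp add: window_pattern_def)
qed

definition shift_perm :: "nat \<Rightarrow> nat list \<Rightarrow> nat \<Rightarrow> nat" where
  "shift_perm s g x = (if s \<le> x \<and> x < s + length g then s + g ! (x - s) else x)"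

lemma shift_perm_permutes:
  assumes "g \<in> permutations_of_set {0..<length g}"
  shows "shift_perm s g permutes {s..<s + length g}"
proof (rule bij_imp_permutes)
  let ?W = "{s..<s + length g}"
  have "distinct g" and set_g: "set g = {0..<length g}"
    using assms by (auto dest: permutations_of_setD)
  have g_less: "\<And>i. i < length g \<Longrightarrow> g ! i < length g"
    using set_g nth_mem by fastforce
  have inj: "inj_on (shift_perm s g) ?W"
  proof (rule inj_onI)
    fix x y assume "x \<in> ?W" "y \<in> ?W" "shift_perm s g x = shift_perm s g y"
    then have "g ! (x - s) = g ! (y - s)" "x - s < length g" "y - s < length g"
      by (auto simp: shift_perm_def)
    then show "x = y"
      using nth_eq_iff_index_eq[OF \<open>distinct g\<close>] \<open>x \<in> ?W\<close> \<open>y \<in> ?W\<close> by force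
  qed
  have "shift_perm s g ` ?W \<subseteq> ?W"
    using g_less by (auto simp: shift_perm_def)
  then show "bij_betw (shift_perm s g) ?W ?W"
    using endo_inj_surj[OF _ _ inj] inj by (simp add: bij_betw_def)
qed (auto simp: shift_perm_def)

definition descents :: "nat list \<Rightarrow> nat list" where
  "descents P = filter (\<lambda>k. P ! Suc k < P ! k) [0..<length P - 1]"

text \<open>The two inequalities keep
  the ascents into and out of the window; the last conjunct (in executable form) says that
  two window positions in increasing order after the move come from positions in increasing
  order, so no inversion is lost.\<close>

definition admissible_rearrangement :: "nat list \<Rightarrow> nat list \<Rightarrow> nat list \<Rightarrow> bool" where
  "admissible_rearrangement P g D \<longleftrightarrow>
     distinct g \<and> set g = {0..<length P} \<and> descents (map ((!) P) g) = D \<and>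
     P ! 0 \<le> P ! (g ! 0) \<and> P ! (g ! (length P - 1)) \<le> P ! (length P - 1) \<and>
     sorted_wrt (\<lambda>(v, x) (v', x'). v < v' \<longrightarrow> x < x') (zip (map ((!) P) g) g)"

lemma admissible_rearrangementD:
  assumes "admissible_rearrangement P g D"
  shows "g \<in> permutations_of_set {0..<length P}" "length g = length P"
    "descents (map ((!) P) g) = D"
    "P ! 0 \<le> P ! (g ! 0)" "P ! (g ! (length P - 1)) \<le> P ! (length P - 1)"
    "\<And>k l. k < l \<Longrightarrow> l < length P \<Longrightarrow> P ! (g ! k) < P ! (g ! l) \<Longrightarrow> g ! k < g ! l"
proof -
  show perm: "g \<in> permutations_of_set {0..<length P}"
    using assms by (auto simp: admissible_rearrangement_def)
  then show length: "length g = length P"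
    by (simp add: length_finite_permutations_of_set)
  show "descents (map ((!) P) g) = D"
    "P ! 0 \<le> P ! (g ! 0)" "P ! (g ! (length P - 1)) \<le> P ! (length P - 1)"
    using assms by (auto simp: admissible_rearrangement_def)
  show "g ! k < g ! l" if "k < l" "l < length P" "P ! (g ! k) < P ! (g ! l)" for k l
    using assms that length
    by (auto simp: admissible_rearrangement_def sorted_wrt_iff_nth_less)
qed

lemma permutation_list_comp:
  assumes "P \<in> permutations_of_set {0..<n}" "g \<in> permutations_of_set {0..<n}"
  shows "map ((!) P) g \<in> permutations_of_set {0..<n}"
proof -
  have "distinct P" "set P = {0..<n}" "distinct g" "set g = {0..<n}" "length P = n"
    using assms by (auto dest: permutations_of_setD simp: length_finite_permutations_of_set)
  moreover from this have "set (map ((!) P) g) = set P"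
    using nth_image[of n P] by simp
  ultimately show ?thesis
    by (intro permutations_of_setI) (auto simp: distinct_map inj_on_nth)
qed

definition patterns_with_descents :: "nat \<Rightarrow> nat list \<Rightarrow> nat list set" where
  "patterns_with_descents w D = {P \<in> permutations_of_set {0..<w}. descents P = D}"

lemma inj_on_patterns_with_descentsI:
  assumes "distinct (map f (filter (\<lambda>P. descents P = D) (permutations_of_set_list [0..<w])))"
  shows "inj_on f (patterns_with_descents w D)"
proof -
  have "patterns_with_descents w D = set (filter (\<lambda>P. descents P = D) (permutations_of_set_list [0..<w]))"
    using permutations_of_list[of "[0..<w]"] by (auto simp: patterns_with_descents_def)
  then show ?thesis
    using assms by (simp add: distinct_map)
qed

lemma weak_le_comp_permutes:
  assumes "\<sigma> permutes {1..Suc r}"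
    and keeps_order: "\<And>a b. a \<in> {1..Suc r} \<Longrightarrow> b \<in> {1..Suc r} \<Longrightarrow> a < b \<Longrightarrow>
      p (\<sigma> a) < p (\<sigma> b) \<Longrightarrow> \<sigma> a < \<sigma> b"
  shows "weak_le r p (p \<circ> \<sigma>)"
  unfolding weak_le_def inversions_def
proof safe
  fix j k assume j: "j \<in> {1..Suc r}" and k: "k \<in> {1..Suc r}" and "j < k" "p k < p j"
  define a b where "a = inv \<sigma> j" and "b = inv \<sigma> k"
  have ab: "a \<in> {1..Suc r}" "b \<in> {1..Suc r}" "\<sigma> a = j" "\<sigma> b = k"
    using permutes_in_image[OF permutes_inv[OF assms(1)]] permutes_inverses(1)[OF assms(1)] j k
    unfolding a_def b_def by blast+
  have "a < b"
  proof (rule ccontr)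
    assume "\<not> a < b"
    then have "b < a"
      using ab \<open>j < k\<close> by (cases "a = b") auto
    then show False
      using keeps_order[of b a] ab \<open>j < k\<close> \<open>p k < p j\<close> by auto
  qed
  then show "\<exists>j' k'. (p j, p k) = ((p \<circ> \<sigma>) j', (p \<circ> \<sigma>) k') \<and> j' \<in> {1..Suc r} \<and> k' \<in> {1..Suc r}
      \<and> j' < k' \<and> (p \<circ> \<sigma>) k' < (p \<circ> \<sigma>) j'"
    using ab \<open>p k < p j\<close> by (intro exI[of _ a] exI[of _ b]) auto
qed

locale window_move =
  fixes r s w :: nat and T S :: "nat set" and DT DS :: "nat list"
    and G :: "nat list \<Rightarrow> nat list"
  assumes window: "1 \<le> s" "0 < w" "s + w \<le> r + 2"
    and T_subset: "T \<subseteq> {1..r}" and S_subset: "S \<subseteq> {1..r}"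
    and DT_def: "DT = filter (\<lambda>k. s + k \<in> T) [0..<w - 1]"
    and DS_def: "DS = filter (\<lambda>k. s + k \<in> S) [0..<w - 1]"
    and T_S_outside: "\<And>x. x < s \<or> s + w - 1 \<le> x \<Longrightarrow> x \<in> T \<longleftrightarrow> x \<in> S"
    and ascent_before: "s - 1 \<notin> T" and ascent_after: "s + w - 1 \<notin> T"
    and admissible: "\<forall>P \<in> patterns_with_descents w DT. admissible_rearrangement P (G P) DS"
    and injective: "inj_on (\<lambda>P. map ((!) P) (G P)) (patterns_with_descents w DT)"
begin

definition move :: "(nat \<Rightarrow> nat) \<Rightarrow> nat \<Rightarrow> nat" where
  "move p = p \<circ> shift_perm s (G (window_pattern p s w))"

lemma window_pattern_in_patterns_with_descents:
  assumes "p \<in> Dset r T"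
  shows "window_pattern p s w \<in> patterns_with_descents w DT"
proof -
  have p: "p permutes {1..Suc r}" and descents_p: "descent_set r p = T"
    using assms by (auto simp: Dset_def perms_def)
  have "inj_on p {s..<s + w}"
    using permutes_inj[OF p] by (rule inj_on_subset) simp
  moreover have "descents (window_pattern p s w) = DT"
    unfolding descents_def DT_def length_window_pattern
  proof (intro filter_cong refl)
    fix k assume "k \<in> set [0..<w - 1]"
    then have "k < w - 1" by simp
    then have "s + k \<in> {1..r}"
      using window by auto
    then show "window_pattern p s w ! Suc k < window_pattern p s w ! k \<longleftrightarrow> s + k \<in> T"
      using window_pattern_less_iff[of "Suc k" w k p s] \<open>k < w - 1\<close> descents_p
      by (auto simp: descent_set_def)
  qed
  ultimately show ?thesis
    by (simp add: patterns_with_descents_def window_pattern_in_permutations)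
qed

context
  fixes p assumes p: "p \<in> Dset r T"
begin

abbreviation "P \<equiv> window_pattern p s w"
abbreviation "g \<equiv> G P"

lemma admissible_g: "admissible_rearrangement P g DS"
  using admissible window_pattern_in_patterns_with_descents[OF p] by blast

lemma g_permutation: "g \<in> permutations_of_set {0..<w}" and length_g: "length g = w"
  using admissible_rearrangementD(1,2)[OF admissible_g] by simp_all

lemma g_less: "k < w \<Longrightarrow> g ! k < w"
  using permutations_of_setD(1)[OF g_permutation] nth_mem[of k g] length_g by auto

lemma shift_perm_g_permutes_window: "shift_perm s g permutes {s..<s + w}"
  using shift_perm_permutes[of g s] g_permutation length_g by simp

lemma shift_perm_g_permutes: "shift_perm s g permutes {1..Suc r}"
  using shift_perm_g_permutes_window window by (auto intro: permutes_subset)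

lemma move_permutes: "move p permutes {1..Suc r}"
  using permutes_compose[OF shift_perm_g_permutes] p by (simp add: move_def Dset_def perms_def)

lemma move_inside: "k < w \<Longrightarrow> move p (s + k) = p (s + g ! k)"
  by (simp add: move_def shift_perm_def length_g)

lemma move_outside: "x < s \<or> s + w \<le> x \<Longrightarrow> move p x = p x"
  by (auto simp: move_def shift_perm_def length_g)

lemma move_less_iff:
  assumes "a < w" "b < w"
  shows "move p (s + a) < move p (s + b) \<longleftrightarrow> map ((!) P) g ! a < map ((!) P) g ! b"
  using assms window_pattern_less_iff[of "g ! a" w "g ! b" p s] g_less length_g
  by (simp add: move_inside)

lemma window_pattern_move: "window_pattern (move p) s w = map ((!) P) g"
proof -
  have "map ((!) P) g \<in> permutations_of_set {0..<w}"
    using permutation_list_comp window_pattern_in_patterns_with_descents[OF p] g_permutation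
    by (auto simp: patterns_with_descents_def)
  then have "window_pattern ((!) (map ((!) P) g)) 0 w = map ((!) P) g"
    by (rule window_pattern_of_permutation_list)
  moreover have "window_pattern (move p) s w = window_pattern ((!) (map ((!) P) g)) 0 w"
    by (rule window_pattern_cong) (simp add: move_less_iff)
  ultimately show ?thesis
    by simp
qed

lemma move_descent_inside:
  assumes "k < w - 1"
  shows "move p (s + Suc k) < move p (s + k) \<longleftrightarrow> s + k \<in> S"
proof -
  have "move p (s + Suc k) < move p (s + k) \<longleftrightarrow> k \<in> set (descents (map ((!) P) g))"
    using assms move_less_iff[of "Suc k" k] by (auto simp: descents_def length_g)
  also have "\<dots> \<longleftrightarrow> s + k \<in> S"
    using assms admissible_rearrangementD(3)[OF admissible_g] by (simp add: DS_def)
  finally show ?thesis .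
qed

lemma ascent_of_p: "x \<in> {1..r} \<Longrightarrow> x \<notin> T \<Longrightarrow> p x \<le> p (Suc x)"
  using p by (auto simp: Dset_def descent_set_def)

lemma move_ascent_before:
  assumes "1 < s"
  shows "move p (s - 1) \<le> move p s"
proof -
  have "\<not> P ! (g ! 0) < P ! 0"
    using admissible_rearrangementD(4)[OF admissible_g] by simp
  then have "p s \<le> p (s + g ! 0)"
    using window_pattern_less_iff[of "g ! 0" w 0 p s] g_less window by simp
  moreover have "s - 1 \<in> {1..r}"
    using assms window by auto
  then have "p (s - 1) \<le> p s"
    using ascent_of_p[of "s - 1"] assms ascent_before by simp
  ultimately show ?thesis
    using move_inside[of 0] move_outside[of "s - 1"] assms window by simp
qed

lemma move_ascent_after:
  assumes "s + w - 1 \<le> r"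
  shows "move p (s + w - 1) \<le> move p (s + w)"
proof -
  have "\<not> P ! (w - 1) < P ! (g ! (w - 1))"
    using admissible_rearrangementD(5)[OF admissible_g] by simp
  then have "p (s + g ! (w - 1)) \<le> p (s + (w - 1))"
    using window_pattern_less_iff[of "w - 1" w "g ! (w - 1)" p s] g_less window by simp
  moreover have "p (s + w - 1) \<le> p (s + w)"
    using ascent_of_p[of "s + w - 1"] assms window ascent_after by simp
  ultimately show ?thesis
    using move_inside[of "w - 1"] move_outside[of "s + w"] window by simp
qed

lemma descent_set_move: "descent_set r (move p) = S"
proof -
  have "move p (Suc x) < move p x \<longleftrightarrow> x \<in> S" if "x \<in> {1..r}" for x
  proof -
    have "s \<le> x \<and> x < s + w - 1 \<or> Suc x = s \<or> x = s + w - 1 \<or> Suc x < s \<or> s + w \<le> x"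
      by linarith
    then consider (inside) "s \<le> x" "x < s + w - 1" | (before) "Suc x = s" | (after) "x = s + w - 1"
      | (outside) "Suc x < s \<or> s + w \<le> x"
      by blast
    then show ?thesis
    proof cases
      case inside
      then show ?thesis
        using move_descent_inside[of "x - s"] by simp
    next
      case before
      then have "x < s" "s - 1 = x"
        by simp_all
      then have "x \<notin> S"
        using T_S_outside[of x] ascent_before by simp
      then show ?thesis
        using move_ascent_before \<open>s - 1 = x\<close> before that by fastforce
    next
      case after
      then have "x \<notin> S"
        using T_S_outside[of x] ascent_after by simp
      then show ?thesis
        using move_ascent_after after that window by simp
    next
      case outside
      then have "x \<in> S \<longleftrightarrow> x \<in> T"
        using T_S_outside[of x] by auto
      moreover have "move p x = p x" "move p (Suc x) = p (Suc x)"
        using outside move_outside by auto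
      ultimately show ?thesis
        using p that by (auto simp: Dset_def descent_set_def)
    qed
  qed
  then show ?thesis
    using S_subset by (auto simp: descent_set_def)
qed

lemma move_undo: "move p \<circ> inv (shift_perm s g) = p"
  using permutes_inverses(1)[OF shift_perm_g_permutes] by (auto simp: move_def)

lemma weak_le_move: "weak_le r p (move p)"
  unfolding move_def
proof (rule weak_le_comp_permutes[OF shift_perm_g_permutes])
  let ?\<sigma> = "shift_perm s g" and ?W = "{s..<s + w}"
  have \<sigma>_window: "?\<sigma> x \<in> ?W \<longleftrightarrow> x \<in> ?W" for x
    by (rule permutes_in_image[OF shift_perm_g_permutes_window])
  have \<sigma>_outside: "?\<sigma> x = x" if "x \<notin> ?W" for x
    by (rule permutes_not_in[OF shift_perm_g_permutes_window that])
  fix a b assume "a < b" and order: "p (?\<sigma> a) < p (?\<sigma> b)"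
  consider (both_inside) "a \<in> ?W" "b \<in> ?W" | (a_inside) "a \<in> ?W" "b \<notin> ?W"
    | (b_inside) "a \<notin> ?W" "b \<in> ?W" | (both_outside) "a \<notin> ?W" "b \<notin> ?W"
    by blast
  then show "?\<sigma> a < ?\<sigma> b"
  proof cases
    case both_inside
    define k l where "k = a - s" and "l = b - s"
    have "k < l" "l < w" "a = s + k" "b = s + l"
      using both_inside \<open>a < b\<close> by (auto simp: k_def l_def)
    then have "P ! (g ! k) < P ! (g ! l)"
      using order window_pattern_less_iff[of "g ! k" w "g ! l" p s] g_less
      by (simp add: shift_perm_def length_g)
    then have "g ! k < g ! l"
      using admissible_rearrangementD(6)[OF admissible_g] \<open>k < l\<close> \<open>l < w\<close> by simp
    then show ?thesis
      using \<open>a = s + k\<close> \<open>b = s + l\<close> \<open>l < w\<close> \<open>k < l\<close> by (simp add: shift_perm_def length_g)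
  next
    case a_inside
    then show ?thesis
      using \<sigma>_window[of a] \<sigma>_outside[of b] \<open>a < b\<close> by auto
  next
    case b_inside
    then show ?thesis
      using \<sigma>_window[of b] \<sigma>_outside[of a] \<open>a < b\<close> by auto
  next
    case both_outside
    then show ?thesis
      using \<sigma>_outside[of a] \<sigma>_outside[of b] \<open>a < b\<close> by simp
  qed
qed

end

lemma inj_on_move: "inj_on move (Dset r T)"
proof (rule inj_onI)
  fix p1 p2 assume p1: "p1 \<in> Dset r T" and p2: "p2 \<in> Dset r T" and "move p1 = move p2"
  then have "window_pattern p1 s w = window_pattern p2 s w"
    using window_pattern_move[OF p1] window_pattern_move[OF p2]
      window_pattern_in_patterns_with_descents[OF p1] window_pattern_in_patterns_with_descents[OF p2]
      inj_onD[OF injective]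
    by metis
  then show "p1 = p2"
    using move_undo[OF p1] move_undo[OF p2] \<open>move p1 = move p2\<close> by metis
qed

theorem dominates: "dominates r S T"
  unfolding dominates_def
proof (intro exI[of _ move] conjI ballI inj_on_move)
  show "move ` Dset r T \<subseteq> Dset r S"
    using move_permutes descent_set_move by (auto simp: Dset_def perms_def)
qed (rule weak_le_move)

end

text \<open>Configurations A, B and C use the windows \<open>{j, j + 1}\<close>, \<open>{j - 1..j + 2}\<close> and
  \<open>{j - 2..j + 3}\<close>; each condition fixes which positions of the window lie in \<open>T\<close> and
  keeps \<open>T\<close> away from the position before the window and from its last position.\<close>

definition config_A :: "nat set \<Rightarrow> nat \<Rightarrow> bool" where
  "config_A T j \<longleftrightarrow> j - 1 \<notin> T \<and> j + 1 \<notin> T"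

definition config_B :: "nat \<Rightarrow> nat set \<Rightarrow> nat \<Rightarrow> bool" where
  "config_B r T j \<longleftrightarrow> j - 1 \<in> T \<and> j - 2 \<notin> T \<and> j + 1 \<notin> T \<and> j + 2 \<notin> T \<and> j < r"

definition config_C :: "nat set \<Rightarrow> nat \<Rightarrow> bool" where
  "config_C T j \<longleftrightarrow> 3 \<le> j \<and> j - 1 \<in> T \<and> j + 2 \<in> T \<and> j - 3 \<notin> T \<and> j - 2 \<notin> T \<and> j + 1 \<notin> T \<and> j + 3 \<notin> T"

definition addable_positions :: "nat \<Rightarrow> nat set \<Rightarrow> nat set" where
  "addable_positions r T = {j \<in> {1..r} - T. config_A T j \<or> config_B r T j \<or> config_C T j}"

definition blocked_positions :: "nat \<Rightarrow> nat set \<Rightarrow> nat set" where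
  "blocked_positions r T = {1..r} - T - addable_positions r T"

text \<open>A blocked position \<open>j\<close> is charged to \<open>j + 1\<close> if that lies in \<open>T\<close>, and otherwise to
  \<open>j - 1\<close>, which then lies in \<open>T\<close> because configuration A fails.\<close>

definition charged_left :: "nat \<Rightarrow> nat set \<Rightarrow> nat set" where
  "charged_left r T = {t \<in> T. t - 1 \<in> blocked_positions r T}"

definition charged_right :: "nat \<Rightarrow> nat set \<Rightarrow> nat set" where
  "charged_right r T = {t \<in> T. Suc t \<in> blocked_positions r T \<and> t + 2 \<notin> T}"

lemma card_addable_blocked_positions:
  assumes "T \<subseteq> {1..r}"
  shows "card (addable_positions r T) + card (blocked_positions r T) + card T = r"
proof -
  have "addable_positions r T \<union> blocked_positions r T = {1..r} - T"
    "addable_positions r T \<inter> blocked_positions r T = {}"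
    by (auto simp: addable_positions_def blocked_positions_def)
  then have "card (addable_positions r T) + card (blocked_positions r T) = card ({1..r} - T)"
    by (metis card_Un_disjoint finite_Diff finite_Un finite_atLeastAtMost)
  also have "\<dots> = r - card T"
    using assms by (simp add: card_Diff_subset finite_subset)
  finally show ?thesis
    using assms card_mono[of "{1..r}" T] by simp
qed

lemma blocked_positions_subset_charged:
  "blocked_positions r T \<subseteq> (\<lambda>t. t - 1) ` charged_left r T \<union> Suc ` charged_right r T"
proof
  fix j assume j: "j \<in> blocked_positions r T"
  then have "j - 1 \<in> T \<or> j + 1 \<in> T" "1 \<le> j"
    by (auto simp: blocked_positions_def addable_positions_def config_A_def)
  then consider "j + 1 \<in> T" | "j + 1 \<notin> T" "j - 1 \<in> T" "j = Suc (j - 1)"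
    by fastforce
  then show "j \<in> (\<lambda>t. t - 1) ` charged_left r T \<union> Suc ` charged_right r T"
  proof cases
    case 1
    then have "j + 1 \<in> charged_left r T"
      using j by (simp add: charged_left_def)
    then show ?thesis
      by force
  next
    case 2
    then have "j - 1 \<in> charged_right r T"
      using j by (simp add: charged_right_def numeral_2_eq_2)
    then show ?thesis
      using \<open>j = Suc (j - 1)\<close> by blast
  qed
qed

lemma card_blocked_positions_le:
  assumes "T \<subseteq> {1..r}"
  shows "card (blocked_positions r T) \<le> card T + card (charged_left r T \<inter> charged_right r T)"
proof -
  have finite: "finite (charged_left r T)" "finite (charged_right r T)"
    using assms by (auto simp: charged_left_def charged_right_def intro: finite_subset)
  have "card (blocked_positions r T) \<le> card ((\<lambda>t. t - 1) ` charged_left r T \<union> Suc ` charged_right r T)"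
    using blocked_positions_subset_charged finite by (intro card_mono) auto
  also have "\<dots> \<le> card (charged_left r T) + card (charged_right r T)"
    by (rule order.trans[OF card_Un_le add_mono[OF card_image_le card_image_le]]) (use finite in auto)
  also have "\<dots> = card (charged_left r T \<union> charged_right r T) + card (charged_left r T \<inter> charged_right r T)"
    by (rule card_Un_Int) (use finite in auto)
  also have "card (charged_left r T \<union> charged_right r T) \<le> card T"
    using assms by (intro card_mono) (auto simp: charged_left_def charged_right_def intro: finite_subset)
  finally show ?thesis
    by simp
qed

lemma charged_twice_structure:
  assumes "t \<in> charged_left r T \<inter> charged_right r T"
  shows "t \<in> T" "2 \<le> t" "t - 1 \<notin> T" "Suc t \<noteq> r \<Longrightarrow> t + 3 \<in> T \<and> (t - 2 \<in> T \<or> t + 4 \<in> T)"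
proof -
  have left: "t \<in> T" "t - 1 \<in> {1..r}" "t - 1 \<notin> T"
    and right: "Suc t \<in> {1..r}" "t + 2 \<notin> T" "\<not> config_B r T (Suc t)" "\<not> config_C T (Suc t)"
    using assms
    by (auto simp: charged_left_def charged_right_def blocked_positions_def addable_positions_def)
  then show "t \<in> T" "2 \<le> t" "t - 1 \<notin> T"
    by auto
  assume "Suc t \<noteq> r"
  then show "t + 3 \<in> T \<and> (t - 2 \<in> T \<or> t + 4 \<in> T)"
    using left right by (auto simp: config_B_def config_C_def numeral_eq_Suc)
qed

lemma card_charged_twice_but_one_le:
  assumes "T \<subseteq> {1..r}"
  shows "card (charged_left r T \<inter> charged_right r T - {r - 1}) \<le> card (T - charged_right r T)"
proof (rule card_inj_on_le)
  let ?D = "charged_left r T \<inter> charged_right r T - {r - 1}" and ?Y = "charged_right r T"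
  define f where "f t = (if t + 4 \<in> T then t + 3 else t - 2)" for t
  have no_collision: "a + 3 \<noteq> b - 2" if "a + 4 \<in> T" "b - 1 \<notin> T" "2 \<le> b" for a b
  proof
    assume "a + 3 = b - 2"
    with that have "b - 1 = a + 4"
      by arith
    with that show False
      by simp
  qed
  show "inj_on f ?D"
  proof (rule inj_onI)
    fix a b assume a: "a \<in> ?D" and b: "b \<in> ?D" and "f a = f b"
    have "Suc a \<noteq> r" "Suc b \<noteq> r"
      using a b by auto
    then show "a = b"
      using \<open>f a = f b\<close> charged_twice_structure[of a r T] charged_twice_structure[of b r T] a b
        no_collision[of a b] no_collision[of b a]
      unfolding f_def by (auto split: if_splits)
  qed
  show "f ` ?D \<subseteq> T - ?Y"
  proof
    fix z assume "z \<in> f ` ?D"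
    then obtain t where t: "t \<in> charged_left r T \<inter> ?Y" "t \<noteq> r - 1" and z: "z = f t"
      by auto
    have "Suc t \<noteq> r"
      using t(2) by auto
    note shape = charged_twice_structure[OF t(1)] charged_twice_structure(4)[OF t(1) this]
    show "z \<in> T - ?Y"
    proof (cases "t + 4 \<in> T")
      case True
      moreover have "Suc (t + 3) = t + 4"
        by simp
      ultimately have "Suc (t + 3) \<notin> blocked_positions r T"
        unfolding blocked_positions_def by (metis Diff_iff)
      then have "t + 3 \<notin> ?Y"
        unfolding charged_right_def by blast
      moreover have "z = t + 3"
        using True by (simp add: z f_def)
      ultimately show ?thesis
        using shape by simp
    next
      case False
      moreover have "t - 2 + 2 = t"
        using shape by simp
      ultimately show ?thesis
        using shape by (auto simp: z f_def charged_right_def)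
    qed
  qed
  show "finite (T - ?Y)"
    using assms by (auto intro: finite_subset)
qed

lemma card_charged_twice:
  assumes "T \<subseteq> {1..r}"
  shows "2 * card (charged_left r T \<inter> charged_right r T) \<le> card T + 1"
proof -
  let ?D = "charged_left r T \<inter> charged_right r T" and ?Y = "charged_right r T"
  have finite: "finite ?D" "finite ?Y" "finite T" and "?Y \<subseteq> T"
    using assms by (auto simp: charged_left_def charged_right_def intro: finite_subset)
  have "card ?D \<le> card (?D - {r - 1}) + 1"
    using finite(1) by (cases "r - 1 \<in> ?D") (simp_all add: card_Diff_singleton)
  moreover have "card ?D \<le> card ?Y" "card ?Y \<le> card T"
    using finite \<open>?Y \<subseteq> T\<close> by (auto intro: card_mono)
  moreover have "card (T - ?Y) = card T - card ?Y"
    using finite \<open>?Y \<subseteq> T\<close> by (simp add: card_Diff_subset)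
  ultimately show ?thesis
    using card_charged_twice_but_one_le[OF assms] by linarith
qed

lemma card_addable_positions:
  assumes "T \<subseteq> {1..r}"
  shows "2 * r \<le> 2 * card (addable_positions r T) + 5 * card T + 1"
  using card_addable_blocked_positions[OF assms] card_blocked_positions_le[OF assms]
    card_charged_twice[OF assms]
  by linarith

lemma dominates_insert_window:
  assumes "T \<subseteq> {1..r}" "j \<in> {1..r}" "j \<notin> T"
    and "1 \<le> s" "s \<le> j" "j < s + w - 1" "s + w \<le> r + 2" "s - 1 \<notin> T" "s + w - 1 \<notin> T"
    and "DT = filter (\<lambda>k. s + k \<in> T) [0..<w - 1]"
    and "DS = filter (\<lambda>k. s + k \<in> insert j T) [0..<w - 1]"
    and "\<forall>P \<in> patterns_with_descents w DT. admissible_rearrangement P (G P) DS"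
    and "inj_on (\<lambda>P. map ((!) P) (G P)) (patterns_with_descents w DT)"
  shows "dominates r (insert j T) T"
proof (rule window_move.dominates)
  show "window_move r s w T (insert j T) DT DS G"
    by unfold_locales (use assms in auto)
qed

lemma dominates_insert_config_A:
  assumes "T \<subseteq> {1..r}" "j \<in> {1..r}" "j \<notin> T" "config_A T j"
  shows "dominates r (insert j T) T"
proof (rule dominates_insert_window[where s = j and w = 2 and DT = "[]" and DS = "[0]"
      and G = "\<lambda>_. [1, 0]"])
  show "\<forall>P \<in> patterns_with_descents 2 []. admissible_rearrangement P [1, 0] [0]"
    by code_simp
  show "inj_on (\<lambda>P. map ((!) P) [1, 0]) (patterns_with_descents 2 [])"
    by (rule inj_on_patterns_with_descentsI) code_simp
qed (use assms in \<open>auto simp: config_A_def\<close>)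

text \<open>One admissible rearrangement for every window pattern with the descents of \<open>T\<close>,
  found by computer search.\<close>

definition table_B :: "(nat list \<times> nat list) list" where
  "table_B = [([1,0,2,3], [2,0,1,3]), ([2,0,1,3], [3,0,1,2]), ([3,0,1,2], [0,2,1,3])]"

lemma dominates_insert_config_B:
  assumes "T \<subseteq> {1..r}" "j \<in> {1..r}" "j \<notin> T" "config_B r T j"
  shows "dominates r (insert j T) T"
proof -
  have "j - 1 \<in> T"
    using assms(4) by (simp add: config_B_def)
  then have "2 \<le> j"
    using assms(1) by force
  then obtain m where m: "j = m + 2"
    by (metis le_add_diff_inverse2)
  have "m + 1 \<in> T" "m \<notin> T" "m + 3 \<notin> T" "m + 4 \<notin> T" "m + 2 < r"
    using assms(4) by (auto simp: config_B_def m numeral_eq_Suc)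
  then show ?thesis
  proof (intro dominates_insert_window[where s = "m + 1" and w = 4 and DT = "[0]" and DS = "[0, 1]"
        and G = "\<lambda>P. the (map_of table_B P)"])
    show "\<forall>P \<in> patterns_with_descents 4 [0]. admissible_rearrangement P (the (map_of table_B P)) [0, 1]"
      by code_simp
    show "inj_on (\<lambda>P. map ((!) P) (the (map_of table_B P))) (patterns_with_descents 4 [0])"
      by (rule inj_on_patterns_with_descentsI) code_simp
  qed (use assms in \<open>auto simp: m upt_rec numeral_eq_Suc\<close>)
qed

definition table_C :: "(nat list \<times> nat list) list" where
  "table_C = [
    ([0,2,1,3,5,4], [1,3,2,0,4,5]),
    ([0,2,1,4,5,3], [0,3,1,2,4,5]),
    ([0,3,1,2,5,4], [0,1,3,2,4,5]),
    ([0,3,1,4,5,2], [0,4,1,2,3,5]),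
    ([0,3,2,4,5,1], [0,3,1,2,4,5]),
    ([0,4,1,2,5,3], [0,4,1,3,5,2]),
    ([0,4,1,3,5,2], [0,1,3,2,4,5]),
    ([0,4,2,3,5,1], [1,4,2,0,3,5]),
    ([0,5,1,2,4,3], [0,1,3,2,4,5]),
    ([0,5,1,3,4,2], [0,1,4,2,3,5]),
    ([0,5,2,3,4,1], [0,1,3,2,4,5]),
    ([1,2,0,3,5,4], [0,3,1,2,4,5]),
    ([1,2,0,4,5,3], [0,4,1,2,3,5]),
    ([1,3,0,2,5,4], [0,4,1,3,5,2]),
    ([1,3,0,4,5,2], [0,3,1,2,4,5]),
    ([1,3,2,4,5,0], [1,3,2,0,4,5]),
    ([1,4,0,2,5,3], [0,1,3,2,4,5]),
    ([1,4,0,3,5,2], [1,4,0,2,3,5]),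
    ([1,4,2,3,5,0], [0,1,3,2,4,5]),
    ([1,5,0,2,4,3], [0,1,4,2,5,3]),
    ([1,5,0,3,4,2], [0,1,3,2,4,5]),
    ([1,5,2,3,4,0], [0,1,4,2,3,5]),
    ([2,3,0,1,5,4], [0,4,1,2,5,3]),
    ([2,3,0,4,5,1], [1,3,0,2,4,5]),
    ([2,3,1,4,5,0], [0,3,1,2,4,5]),
    ([2,4,0,1,5,3], [0,1,3,2,4,5]),
    ([2,4,0,3,5,1], [0,1,3,2,4,5]),
    ([2,4,1,3,5,0], [0,4,1,2,3,5]),
    ([2,5,0,1,4,3], [0,1,3,2,4,5]),
    ([2,5,0,3,4,1], [0,1,4,2,3,5]),
    ([2,5,1,3,4,0], [0,1,3,2,4,5]),
    ([3,4,0,1,5,2], [0,1,3,2,4,5]),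
    ([3,4,0,2,5,1], [0,4,1,2,3,5]),
    ([3,4,1,2,5,0], [0,4,1,2,3,5]),
    ([3,5,0,1,4,2], [0,1,3,2,4,5]),
    ([3,5,0,2,4,1], [0,1,3,2,4,5]),
    ([3,5,1,2,4,0], [0,1,3,2,4,5]),
    ([4,5,0,1,3,2], [0,1,4,3,5,2]),
    ([4,5,0,2,3,1], [0,1,4,2,3,5]),
    ([4,5,1,2,3,0], [0,1,3,2,4,5])]"

lemma dominates_insert_config_C:
  assumes "T \<subseteq> {1..r}" "j \<in> {1..r}" "j \<notin> T" "config_C T j"
  shows "dominates r (insert j T) T"
proof -
  have "3 \<le> j"
    using assms(4) by (simp add: config_C_def)
  then obtain m where m: "j = m + 3"
    by (metis le_add_diff_inverse2)
  have "m + 2 \<in> T" "m + 5 \<in> T" "m \<notin> T" "m + 1 \<notin> T" "m + 4 \<notin> T" "m + 6 \<notin> T"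
    using assms(4) by (auto simp: config_C_def m numeral_eq_Suc)
  moreover have "m + 5 \<le> r"
    using \<open>m + 5 \<in> T\<close> assms(1) by auto
  ultimately show ?thesis
  proof (intro dominates_insert_window[where s = "m + 1" and w = 6 and DT = "[1, 4]"
        and DS = "[1, 2, 4]" and G = "\<lambda>P. the (map_of table_C P)"])
    show "\<forall>P \<in> patterns_with_descents 6 [1, 4].
        admissible_rearrangement P (the (map_of table_C P)) [1, 2, 4]"
      by code_simp
    show "inj_on (\<lambda>P. map ((!) P) (the (map_of table_C P))) (patterns_with_descents 6 [1, 4])"
      by (rule inj_on_patterns_with_descentsI) code_simp
  qed (use assms in \<open>auto simp: m upt_rec numeral_eq_Suc\<close>)
qed

lemma dominates_insert_addable:
  assumes "T \<subseteq> {1..r}" "j \<in> addable_positions r T"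
  shows "dominates r (insert j T) T"
  using assms dominates_insert_config_A dominates_insert_config_B dominates_insert_config_C
  by (auto simp: addable_positions_def)

lemma card_addable_positions_le:
  assumes "T \<subseteq> {1..r}"
  shows "card (addable_positions r T)
    \<le> card {S. S \<subseteq> {1..r} \<and> card S = card T + 1 \<and> T \<subseteq> S \<and> dominates r S T}"
proof (rule card_inj_on_le)
  show "inj_on (\<lambda>j. insert j T) (addable_positions r T)"
    by (rule inj_onI) (auto simp: addable_positions_def)
  show "(\<lambda>j. insert j T) ` addable_positions r T
      \<subseteq> {S. S \<subseteq> {1..r} \<and> card S = card T + 1 \<and> T \<subseteq> S \<and> dominates r S T}"
    using assms dominates_insert_addable finite_subset[OF assms]
    by (auto simp: addable_positions_def)
  show "finite {S. S \<subseteq> {1..r} \<and> card S = card T + 1 \<and> T \<subseteq> S \<and> dominates r S T}"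
    by (rule finite_subset[of _ "Pow {1..r}"]) auto
qed

theorem lemma6p1:
  fixes r i :: nat and T :: "nat set"
  assumes "T \<subseteq> {1..r}" and "card T = i"
  shows "of_nat (card {S. S \<subseteq> {1..r} \<and> card S = i + 1 \<and> T \<subseteq> S \<and> dominates r S T})
           \<ge> \<lfloor>real r - 5 / 2 * real i\<rfloor>"
proof -
  let ?N = "card {S. S \<subseteq> {1..r} \<and> card S = i + 1 \<and> T \<subseteq> S \<and> dominates r S T}"
  have "2 * r \<le> 2 * ?N + 5 * i + 1"
    using card_addable_positions[OF assms(1)] card_addable_positions_le[OF assms(1)]
    unfolding assms(2) by linarith
  then have "real r - 5 / 2 * real i < real ?N + 1"
    by linarith
  then show ?thesis
    by (simp add: floor_le_iff)
qed

end
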